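(* Let $X$ be a shift space, $Y$ an irreducible shift space, and $\phi : X \to Y$ an open code which is bi-closing. Then $\phi$ is constant-to-one.
   Context: Shift spaces are closed shift-invariant subsets of $\mathcal{A}^{\mathbb{Z}}$; a code is a continuous shift-commuting map. Irreducible: for all words $u,v$ of $Y$ there is $w$ with $uwv$ a word of $Y$. Open: images of open sets are open. Constant-to-one: all fibers finite with cardinality independent of $y$. Bi-closing: never identifies two distinct left asymptotic points nor two distinct right asymptotic points, where $x,\bar x$ are left (right) asymptotic if $d(\sigma^{-n}x,\sigma^{-n}\bar x)\to0$ ($d(\sigma^{n}x,\sigma^{n}\bar x)\to0$), $d(x,\bar x)=2^{-k}$ with $k$ maximal such that $x_{[-k,k]}=\bar x_{[-k,k]}$. *)

theory Defs
  imports Main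
begin

definition shift_pow :: "int \<Rightarrow> (int \<Rightarrow> 'a) \<Rightarrow> (int \<Rightarrow> 'a)" where
  "shift_pow k x = (\<lambda>i. x (i + k))"

abbreviation shift :: "(int \<Rightarrow> 'a) \<Rightarrow> (int \<Rightarrow> 'a)" where
  "shift \<equiv> shift_pow 1"

text \<open>x and y agree on the central window [-k,k]; d(x,y) \<le> 2^-k iff they agree there.\<close>
definition agree :: "nat \<Rightarrow> (int \<Rightarrow> 'a) \<Rightarrow> (int \<Rightarrow> 'a) \<Rightarrow> bool" where
  "agree k x y \<longleftrightarrow> (\<forall>i. - int k \<le> i \<and> i \<le> int k \<longrightarrow> x i = y i)"

text \<open>Closed subsets of A^Z (product topology = topology of the metric d).\<close>
definition closed_set :: "(int \<Rightarrow> 'a::finite) set \<Rightarrow> bool" where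
  "closed_set X \<longleftrightarrow> (\<forall>x. (\<forall>k. \<exists>y\<in>X. agree k x y) \<longrightarrow> x \<in> X)"

definition shift_space :: "(int \<Rightarrow> 'a::finite) set \<Rightarrow> bool" where
  "shift_space X \<longleftrightarrow> closed_set X \<and> shift ` X = X"

definition open_in_space :: "(int \<Rightarrow> 'a) set \<Rightarrow> (int \<Rightarrow> 'a) set \<Rightarrow> bool" where
  "open_in_space X U \<longleftrightarrow> U \<subseteq> X \<and> (\<forall>x\<in>U. \<exists>k. \<forall>y\<in>X. agree k x y \<longrightarrow> y \<in> U)"

definition occurs :: "'a list \<Rightarrow> (int \<Rightarrow> 'a) \<Rightarrow> bool" where
  "occurs w x \<longleftrightarrow> (\<exists>i. \<forall>j<length w. x (i + int j) = w ! j)"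

definition is_word :: "(int \<Rightarrow> 'a) set \<Rightarrow> 'a list \<Rightarrow> bool" where
  "is_word Y w \<longleftrightarrow> (\<exists>y\<in>Y. occurs w y)"

definition irreducible :: "(int \<Rightarrow> 'a) set \<Rightarrow> bool" where
  "irreducible Y \<longleftrightarrow>
     (\<forall>u v. is_word Y u \<and> is_word Y v \<longrightarrow> (\<exists>w. is_word Y (u @ w @ v)))"

definition is_code :: "(int \<Rightarrow> 'a::finite) set \<Rightarrow> (int \<Rightarrow> 'b::finite) set
    \<Rightarrow> ((int \<Rightarrow> 'a) \<Rightarrow> (int \<Rightarrow> 'b)) \<Rightarrow> bool" where
  "is_code X Y \<phi> \<longleftrightarrow>
     (\<forall>x\<in>X. \<phi> x \<in> Y) \<and>
     (\<forall>x\<in>X. \<phi> (shift x) = shift (\<phi> x)) \<and>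
     (\<forall>x\<in>X. \<forall>n. \<exists>m. \<forall>x'\<in>X. agree m x x' \<longrightarrow> agree n (\<phi> x) (\<phi> x'))"

definition open_code :: "(int \<Rightarrow> 'a) set \<Rightarrow> (int \<Rightarrow> 'b) set
    \<Rightarrow> ((int \<Rightarrow> 'a) \<Rightarrow> (int \<Rightarrow> 'b)) \<Rightarrow> bool" where
  "open_code X Y \<phi> \<longleftrightarrow> (\<forall>U. open_in_space X U \<longrightarrow> open_in_space Y (\<phi> ` U))"

text \<open>d(sigma^n x, sigma^n y) \<rightarrow> 0 (n \<rightarrow> \<infinity>), unfolded: for every window size k,
  eventually sigma^n x and sigma^n y agree on [-k,k].\<close>
definition right_asymptotic :: "(int \<Rightarrow> 'a) \<Rightarrow> (int \<Rightarrow> 'a) \<Rightarrow> bool" where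
  "right_asymptotic x y \<longleftrightarrow>
     (\<forall>k. \<exists>N. \<forall>n\<ge>N. agree k (shift_pow (int n) x) (shift_pow (int n) y))"

definition left_asymptotic :: "(int \<Rightarrow> 'a) \<Rightarrow> (int \<Rightarrow> 'a) \<Rightarrow> bool" where
  "left_asymptotic x y \<longleftrightarrow>
     (\<forall>k. \<exists>N. \<forall>n\<ge>N. agree k (shift_pow (- int n) x) (shift_pow (- int n) y))"

definition bi_closing :: "(int \<Rightarrow> 'a) set \<Rightarrow> ((int \<Rightarrow> 'a) \<Rightarrow> (int \<Rightarrow> 'b)) \<Rightarrow> bool" where
  "bi_closing X \<phi> \<longleftrightarrow>
     (\<forall>x\<in>X. \<forall>x'\<in>X. x \<noteq> x' \<and> left_asymptotic x x' \<longrightarrow> \<phi> x \<noteq> \<phi> x') \<and>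
     (\<forall>x\<in>X. \<forall>x'\<in>X. x \<noteq> x' \<and> right_asymptotic x x' \<longrightarrow> \<phi> x \<noteq> \<phi> x')"

definition constant_to_one :: "(int \<Rightarrow> 'a) set \<Rightarrow> (int \<Rightarrow> 'b) set
    \<Rightarrow> ((int \<Rightarrow> 'a) \<Rightarrow> (int \<Rightarrow> 'b)) \<Rightarrow> bool" where
  "constant_to_one X Y \<phi> \<longleftrightarrow>
     (\<exists>c. \<forall>y\<in>Y. finite {x\<in>X. \<phi> x = y} \<and> card {x\<in>X. \<phi> x = y} = c)"

end

theory Submission
  imports Defs
begin

text \<open>Bi-closing and compactness give a uniform D such that two distinct points with the same
  image already differ on the window [-D, D]: otherwise a limit of ever longer agreeing pairs,
  centred at a disagreement, would be a pair of distinct left or right asymptotic points with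
  the same image. Hence every fibre is finite, with as many points as D-windows. Openness makes
  the set of D-windows of the fibre over y lower semicontinuous in y, and shifting y does not
  change the fibre size. Irreducibility provides points arbitrarily close to y2 whose orbit
  passes close to y1, so they have at least as many preimages as y1; by compactness their
  windows reappear in the fibre of y2. By symmetry all fibres have the same size.\<close>

definition window :: "nat \<Rightarrow> (int \<Rightarrow> 'a) \<Rightarrow> 'a list" where
  "window k x = map x [- int k..int k]"

lemma agree_iff_window: "agree k x y \<longleftrightarrow> window k x = window k y"
  unfolding agree_def window_def by auto

lemma length_window [simp]: "length (window k x) = 2 * k + 1"
  by (simp add: window_def)

lemma nth_window: "j < 2 * k + 1 \<Longrightarrow> window k x ! j = x (- int k + int j)"
  unfolding window_def by simp

lemma finite_range_window: "finite (range (window k :: (int \<Rightarrow> 'a::finite) \<Rightarrow> 'a list))"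
proof (rule finite_subset)
  show "range (window k) \<subseteq> {xs :: 'a list. set xs \<subseteq> UNIV \<and> length xs = 2 * k + 1}"
    by auto
  show "finite {xs :: 'a list. set xs \<subseteq> UNIV \<and> length xs = 2 * k + 1}"
    by (rule finite_lists_length_eq) simp
qed

lemma finite_window_image: "finite (window k ` (A :: (int \<Rightarrow> 'a::finite) set))"
  by (rule finite_subset[OF _ finite_range_window]) auto

lemma agree_mono: "m \<le> k \<Longrightarrow> agree k x y \<Longrightarrow> agree m x y"
  unfolding agree_def by force

lemma agree_sym: "agree k x y \<Longrightarrow> agree k y x"
  unfolding agree_def by force

lemma agree_trans: "agree k x y \<Longrightarrow> agree k y z \<Longrightarrow> agree k x z"
  unfolding agree_def by force

lemma agreeD: "agree k x y \<Longrightarrow> \<bar>i\<bar> \<le> int k \<Longrightarrow> x i = y i"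
  unfolding agree_def by (metis abs_le_iff minus_le_iff)

lemma agree_nat_abs: "agree (nat \<bar>i\<bar>) x y \<Longrightarrow> x i = y i"
  by (simp add: agreeD)

lemma eq_if_agree_all: "(\<And>k. agree k x y) \<Longrightarrow> x = y"
  using agree_nat_abs by blast

lemma agree_shift_pow_iff:
  "agree k y (shift_pow (i + int k) z) \<longleftrightarrow> (\<forall>j < 2 * k + 1. z (i + int j) = window k y ! j)"
proof
  assume ag: "agree k y (shift_pow (i + int k) z)"
  show "\<forall>j < 2 * k + 1. z (i + int j) = window k y ! j"
  proof (intro allI impI)
    fix j assume j: "j < 2 * k + 1"
    then have "window k y ! j = y (- int k + int j)"
      by (rule nth_window)
    also have "\<dots> = shift_pow (i + int k) z (- int k + int j)"
      using j by (intro agreeD[OF ag]) auto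
    also have "\<dots> = z (i + int j)"
      unfolding shift_pow_def by (simp add: algebra_simps)
    finally show "z (i + int j) = window k y ! j"
      by simp
  qed
next
  assume w: "\<forall>j < 2 * k + 1. z (i + int j) = window k y ! j"
  show "agree k y (shift_pow (i + int k) z)"
    unfolding agree_def
  proof (intro allI impI)
    fix t assume t: "- int k \<le> t \<and> t \<le> int k"
    define j where "j = nat (t + int k)"
    have j: "j < 2 * k + 1" "t = - int k + int j"
      using t unfolding j_def by auto
    then have "window k y ! j = y t"
      by (simp add: nth_window)
    moreover have "shift_pow (i + int k) z t = z (i + int j)"
      unfolding shift_pow_def j(2) by (simp add: algebra_simps)
    ultimately show "y t = shift_pow (i + int k) z t"
      using w j(1) by simp
  qed
qed

section \<open>Compactness of the full shift\<close>

definition cluster_point :: "nat set \<Rightarrow> (nat \<Rightarrow> int \<Rightarrow> 'a) \<Rightarrow> (int \<Rightarrow> 'a) \<Rightarrow> bool" where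
  "cluster_point I s c \<longleftrightarrow> (\<forall>k N. \<exists>n\<in>I. N \<le> n \<and> agree k c (s n))"

lemma infinite_window_class:
  fixes s :: "nat \<Rightarrow> int \<Rightarrow> 'a::finite"
  assumes "infinite J"
  shows "\<exists>J'\<subseteq>J. infinite J' \<and> (\<forall>n\<in>J'. \<forall>n'\<in>J'. agree k (s n) (s n'))"
proof -
  have "finite ((\<lambda>n. window k (s n)) ` J)"
    by (rule finite_subset[OF _ finite_range_window[of k]]) auto
  then obtain n0 where "n0 \<in> J" "infinite {n\<in>J. window k (s n) = window k (s n0)}"
    using pigeonhole_infinite[OF assms] by blast
  then show ?thesis
    by (intro exI[of _ "{n\<in>J. window k (s n) = window k (s n0)}"]) (auto simp: agree_iff_window)
qed

lemma nested_window_classes: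
  fixes s :: "nat \<Rightarrow> int \<Rightarrow> 'a::finite"
  assumes "infinite I"
  obtains J where "antimono J" "J 0 \<subseteq> I"
    and "\<And>k. infinite (J k)" and "\<And>k n n'. n \<in> J k \<Longrightarrow> n' \<in> J k \<Longrightarrow> agree k (s n) (s n')"
proof -
  define F where "F k J = (SOME J'. J' \<subseteq> J \<and> infinite J' \<and> (\<forall>n\<in>J'. \<forall>n'\<in>J'. agree k (s n) (s n')))"
    for k J
  have F: "F k J \<subseteq> J \<and> infinite (F k J) \<and> (\<forall>n\<in>F k J. \<forall>n'\<in>F k J. agree k (s n) (s n'))"
    if "infinite J" for k J
    unfolding F_def using someI_ex[OF infinite_window_class[OF that]] .
  define J where "J = rec_nat (F 0 I) (\<lambda>k Jk. F (Suc k) Jk)"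
  have J0: "J 0 = F 0 I" and JS: "J (Suc k) = F (Suc k) (J k)" for k
    unfolding J_def by simp_all
  have Jinf: "infinite (J k)" for k
  proof (induction k)
    case 0
    then show ?case using F[OF assms] by (simp add: J0)
  next
    case (Suc k)
    then show ?case using F[OF Suc] by (simp add: JS)
  qed
  have "antimono J"
    unfolding antimono_iff_le_Suc JS using F[OF Jinf] by blast
  moreover have "J 0 \<subseteq> I"
    using F[OF assms] by (simp add: J0)
  moreover have "agree k (s n) (s n')" if "n \<in> J k" "n' \<in> J k" for k n n'
  proof (cases k)
    case 0
    then show ?thesis using that F[OF assms] by (simp add: J0)
  next
    case (Suc k')
    then show ?thesis using that F[OF Jinf[of k']] by (simp add: JS)
  qed
  ultimately show ?thesis
    using that Jinf by blast
qed

lemma exists_cluster_point: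
  fixes s :: "nat \<Rightarrow> int \<Rightarrow> 'a::finite"
  assumes "infinite I"
  shows "\<exists>c. cluster_point I s c"
proof -
  obtain J where J: "antimono J" "J 0 \<subseteq> I" "\<And>k. infinite (J k)"
    and Jagree: "\<And>k n n'. n \<in> J k \<Longrightarrow> n' \<in> J k \<Longrightarrow> agree k (s n) (s n')"
    using nested_window_classes[OF assms] by blast
  define c where "c i = s (SOME n. n \<in> J (nat \<bar>i\<bar>)) i" for i
  have c_agree: "agree k c (s n)" if n: "n \<in> J k" for k n
    unfolding agree_def
  proof (intro allI impI)
    fix i :: int assume i: "- int k \<le> i \<and> i \<le> int k"
    define m where "m = (SOME n. n \<in> J (nat \<bar>i\<bar>))"
    from i have "nat \<bar>i\<bar> \<le> k"
      by auto
    then have "J k \<subseteq> J (nat \<bar>i\<bar>)"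
      using J(1) by (simp add: antimonoD)
    moreover have "m \<in> J (nat \<bar>i\<bar>)"
      unfolding m_def using J(3) by (metis finite.emptyI some_in_eq)
    ultimately have "agree (nat \<bar>i\<bar>) (s m) (s n)"
      using Jagree n by blast
    then show "c i = s n i"
      unfolding c_def m_def[symmetric] by (rule agree_nat_abs)
  qed
  have "\<exists>n\<in>I. N \<le> n \<and> agree k c (s n)" for k N
  proof -
    have "\<not> J k \<subseteq> {..<N}"
      using J(3)[of k] finite_subset by blast
    then obtain n where "n \<in> J k" "N \<le> n"
      by (meson lessThan_iff not_le subsetI)
    moreover have "J k \<subseteq> I"
      using J(1,2) antimonoD[OF J(1), of 0 k] by simp
    ultimately show ?thesis
      using c_agree by blast
  qed
  then show ?thesis
    unfolding cluster_point_def by blast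
qed

lemma closed_set_cluster_point:
  assumes "closed_set X" "cluster_point I s c" "\<And>n. n \<in> I \<Longrightarrow> s n \<in> X"
  shows "c \<in> X"
  using assms unfolding closed_set_def cluster_point_def by blast

lemma cluster_point_eq_limit:
  assumes "cluster_point I s c" "\<And>n. n \<in> I \<Longrightarrow> agree n y (s n)"
  shows "c = y"
proof (rule eq_if_agree_all)
  fix k
  obtain n where "n \<in> I" "k \<le> n" "agree k c (s n)"
    using assms(1) unfolding cluster_point_def by blast
  then show "agree k c y"
    using assms(2) by (meson agree_mono agree_sym agree_trans)
qed

lemma code_continuous:
  assumes "is_code X Y \<phi>" "x \<in> X"
  obtains m where "\<And>x'. x' \<in> X \<Longrightarrow> agree m x x' \<Longrightarrow> agree k (\<phi> x) (\<phi> x')"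
  using assms unfolding is_code_def by blast

lemma code_cluster_point:
  assumes "is_code X Y \<phi>" "c \<in> X" "cluster_point I s c" "\<And>n. n \<in> I \<Longrightarrow> s n \<in> X"
  shows "cluster_point I (\<lambda>n. \<phi> (s n)) (\<phi> c)"
  unfolding cluster_point_def
proof (intro allI)
  fix k N
  obtain m where m: "\<And>x'. x' \<in> X \<Longrightarrow> agree m c x' \<Longrightarrow> agree k (\<phi> c) (\<phi> x')"
    using code_continuous[OF assms(1,2)] by blast
  obtain n where "n \<in> I" "N \<le> n" "agree m c (s n)"
    using assms(3) unfolding cluster_point_def by blast
  then show "\<exists>n\<in>I. N \<le> n \<and> agree k (\<phi> c) (\<phi> (s n))"
    using m assms(4) by blast
qed

lemma code_eq_at_joint_limit:
  assumes code: "is_code X Y \<phi>" and aX: "a \<in> X" and a'X: "a' \<in> X"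
    and near: "\<And>k. \<exists>n\<in>I. agree k a (A n) \<and> agree k a' (A' n)"
    and pair: "\<And>n. n \<in> I \<Longrightarrow> A n \<in> X \<and> A' n \<in> X \<and> \<phi> (A n) = \<phi> (A' n)"
  shows "\<phi> a = \<phi> a'"
proof (rule eq_if_agree_all)
  fix k
  obtain m where m: "\<And>x'. x' \<in> X \<Longrightarrow> agree m a x' \<Longrightarrow> agree k (\<phi> a) (\<phi> x')"
    using code_continuous[OF code aX] by blast
  obtain m' where m': "\<And>x'. x' \<in> X \<Longrightarrow> agree m' a' x' \<Longrightarrow> agree k (\<phi> a') (\<phi> x')"
    using code_continuous[OF code a'X] by blast
  obtain n where n: "n \<in> I" "agree (max m m') a (A n)" "agree (max m m') a' (A' n)"
    using near by blast
  have "agree k (\<phi> a) (\<phi> (A n))"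
    using m pair[OF n(1)] agree_mono[OF max.cobounded1 n(2)] by blast
  moreover have "agree k (\<phi> a') (\<phi> (A' n))"
    using m' pair[OF n(1)] agree_mono[OF max.cobounded2 n(3)] by blast
  ultimately show "agree k (\<phi> a) (\<phi> a')"
    using pair[OF n(1)] agree_sym agree_trans by metis
qed

lemma shift_pow_add: "shift_pow a (shift_pow b x) = shift_pow (a + b) x"
  unfolding shift_pow_def by (simp add: ac_simps)

lemma shift_pow_0 [simp]: "shift_pow 0 x = x"
  unfolding shift_pow_def by simp

lemma shift_pow_inverse [simp]: "shift_pow (- j) (shift_pow j x) = x"
  by (simp add: shift_pow_add)

lemma shift_pow_mem:
  assumes inv: "shift ` X = X" and x: "x \<in> X"
  shows "shift_pow j x \<in> X"
proof (induction j rule: int_induct[where k = 0])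
  case base
  then show ?case using x by simp
next
  case (step1 i)
  then have "shift (shift_pow i x) \<in> X"
    using inv by blast
  then show ?case by (simp add: shift_pow_add add.commute)
next
  case (step2 i)
  then obtain z where "z \<in> X" "shift z = shift_pow i x"
    using inv by (metis imageE)
  then have "z = shift_pow (- 1) (shift_pow i x)"
    by (metis shift_pow_inverse)
  with \<open>z \<in> X\<close> show ?case by (simp add: shift_pow_add)
qed

lemma code_shift_pow:
  assumes inv: "shift ` X = X" and code: "is_code X Y \<phi>" and x: "x \<in> X"
  shows "\<phi> (shift_pow j x) = shift_pow j (\<phi> x)"
proof (induction j rule: int_induct[where k = 0])
  case base
  then show ?case by simp
next
  case (step1 i)
  have "\<phi> (shift_pow (i + 1) x) = \<phi> (shift (shift_pow i x))"
    by (simp add: shift_pow_add add.commute)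
  also have "\<dots> = shift (\<phi> (shift_pow i x))"
    using code shift_pow_mem[OF inv x] unfolding is_code_def by blast
  finally show ?case
    using step1 by (simp add: shift_pow_add add.commute)
next
  case (step2 i)
  define z where "z = shift_pow (i - 1) x"
  have "shift (\<phi> z) = \<phi> (shift z)"
    using code shift_pow_mem[OF inv x] unfolding is_code_def z_def by metis
  also have "\<dots> = shift_pow i (\<phi> x)"
    using step2 by (simp add: z_def shift_pow_add)
  finally have "shift_pow (- 1) (shift (\<phi> z)) = shift_pow (i - 1) (\<phi> x)"
    by (simp add: shift_pow_add)
  then show ?case
    by (simp add: z_def)
qed

definition fibre :: "(int \<Rightarrow> 'a) set \<Rightarrow> ((int \<Rightarrow> 'a) \<Rightarrow> (int \<Rightarrow> 'b)) \<Rightarrow> (int \<Rightarrow> 'b) \<Rightarrow> (int \<Rightarrow> 'a) set"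
  where "fibre X \<phi> y = {x \<in> X. \<phi> x = y}"

lemma fibre_shift_pow:
  assumes inv: "shift ` X = X" and code: "is_code X Y \<phi>"
  shows "fibre X \<phi> (shift_pow j y) = shift_pow j ` fibre X \<phi> y"
proof
  show "shift_pow j ` fibre X \<phi> y \<subseteq> fibre X \<phi> (shift_pow j y)"
    unfolding fibre_def using shift_pow_mem[OF inv] code_shift_pow[OF inv code] by auto
  show "fibre X \<phi> (shift_pow j y) \<subseteq> shift_pow j ` fibre X \<phi> y"
  proof
    fix x assume "x \<in> fibre X \<phi> (shift_pow j y)"
    then have x: "x \<in> X" "\<phi> x = shift_pow j y"
      unfolding fibre_def by auto
    then have "shift_pow (- j) x \<in> fibre X \<phi> y"
      unfolding fibre_def using shift_pow_mem[OF inv] code_shift_pow[OF inv code] by simp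
    then show "x \<in> shift_pow j ` fibre X \<phi> y"
      by (metis image_eqI minus_minus shift_pow_inverse)
  qed
qed

lemma card_fibre_shift_pow:
  assumes "shift ` X = X" and "is_code X Y \<phi>"
  shows "card (fibre X \<phi> (shift_pow j y)) = card (fibre X \<phi> y)"
proof -
  have "inj (shift_pow j :: (int \<Rightarrow> 'a) \<Rightarrow> _)"
    by (metis injI shift_pow_inverse)
  then show ?thesis
    unfolding fibre_shift_pow[OF assms] by (simp add: card_image inj_on_subset)
qed

section \<open>Uniform separation of fibres\<close>

lemma left_asymptoticI:
  assumes "\<And>i. i < 0 \<Longrightarrow> x i = y i"
  shows "left_asymptotic x y"
proof -
  have "\<forall>n\<ge>Suc k. agree k (shift_pow (- int n) x) (shift_pow (- int n) y)" for k
    unfolding agree_def shift_pow_def using assms by auto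
  then show ?thesis
    unfolding left_asymptotic_def by blast
qed

lemma right_asymptoticI:
  assumes "\<And>i. 0 < i \<Longrightarrow> x i = y i"
  shows "right_asymptotic x y"
proof -
  have "\<forall>n\<ge>Suc k. agree k (shift_pow (int n) x) (shift_pow (int n) y)" for k
    unfolding agree_def shift_pow_def using assms by auto
  then show ?thesis
    unfolding right_asymptotic_def by blast
qed

lemma fibre_pair_limit:
  fixes A A' :: "nat \<Rightarrow> int \<Rightarrow> 'a::finite"
  assumes cl: "closed_set X" and code: "is_code X Y \<phi>" and I: "infinite I"
    and pair: "\<And>n. n \<in> I \<Longrightarrow> A n \<in> X \<and> A' n \<in> X \<and> \<phi> (A n) = \<phi> (A' n) \<and> A n 0 \<noteq> A' n 0"
    and agree_Q: "\<And>n i. n \<in> I \<Longrightarrow> Q i \<Longrightarrow> nat \<bar>i\<bar> \<le> n \<Longrightarrow> A n i = A' n i"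
  shows "\<exists>a\<in>X. \<exists>a'\<in>X. \<phi> a = \<phi> a' \<and> a 0 \<noteq> a' 0 \<and> (\<forall>i. Q i \<longrightarrow> a i = a' i)"
proof -
  obtain c where "cluster_point I (\<lambda>n i. (A n i, A' n i)) c"
    using exists_cluster_point[OF I] by blast
  define a where "a = fst \<circ> c"
  define a' where "a' = snd \<circ> c"
  have "agree k a (A n) \<and> agree k a' (A' n)" if "agree k c (\<lambda>i. (A n i, A' n i))" for k n
    using that unfolding agree_def a_def a'_def by auto
  then have near: "\<exists>n\<in>I. N \<le> n \<and> agree k a (A n) \<and> agree k a' (A' n)" for k N
    using \<open>cluster_point I _ c\<close> unfolding cluster_point_def by blast
  have "cluster_point I A a" "cluster_point I A' a'"
    using near unfolding cluster_point_def by blast+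
  then have aX: "a \<in> X" and a'X: "a' \<in> X"
    using closed_set_cluster_point[OF cl] pair by blast+
  have "a 0 \<noteq> a' 0"
  proof -
    obtain n where n: "n \<in> I" "agree (nat \<bar>0\<bar>) a (A n)" "agree (nat \<bar>0\<bar>) a' (A' n)"
      using near by blast
    have "a 0 = A n 0" "a' 0 = A' n 0"
      using agree_nat_abs[OF n(2)] agree_nat_abs[OF n(3)] .
    then show ?thesis
      using pair[OF n(1)] by simp
  qed
  moreover have "a i = a' i" if "Q i" for i
  proof -
    obtain n where n: "n \<in> I" "nat \<bar>i\<bar> \<le> n"
      and agrees: "agree (nat \<bar>i\<bar>) a (A n)" "agree (nat \<bar>i\<bar>) a' (A' n)"
      using near by blast
    have "a i = A n i" "a' i = A' n i"
      using agree_nat_abs[OF agrees(1)] agree_nat_abs[OF agrees(2)] .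
    then show ?thesis
      using agree_Q[OF n(1) that n(2)] by simp
  qed
  moreover have "\<phi> a = \<phi> a'"
    by (rule code_eq_at_joint_limit[where I = I and A = A and A' = A', OF code aX a'X])
      (use near pair in blast)+
  ultimately show ?thesis
    using aX a'X by blast
qed

text \<open>Shift a disagreement of minimal distance from the origin to the origin.\<close>

lemma fibre_pair_centred:
  assumes inv: "shift ` X = X" and code: "is_code X Y \<phi>"
    and x: "x \<in> X" "x' \<in> X" "\<phi> x = \<phi> x'" "agree D x x'" "x \<noteq> x'"
  obtains a a' where "a \<in> X" "a' \<in> X" "\<phi> a = \<phi> a'" "a 0 \<noteq> a' 0"
    "(\<forall>i<0. nat \<bar>i\<bar> \<le> D \<longrightarrow> a i = a' i) \<or> (\<forall>i>0. nat \<bar>i\<bar> \<le> D \<longrightarrow> a i = a' i)"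
proof -
  obtain p0 where p0: "x p0 \<noteq> x' p0"
    using x(5) by auto
  obtain p where p: "x p \<noteq> x' p" and p_min: "\<And>q. x q \<noteq> x' q \<Longrightarrow> nat \<bar>p\<bar> \<le> nat \<bar>q\<bar>"
    using ex_has_least_nat[of "\<lambda>p. x p \<noteq> x' p" p0 "\<lambda>p. nat \<bar>p\<bar>", OF p0] by blast
  have pD: "int D < \<bar>p\<bar>"
    using agreeD[OF x(4)] p by force
  have closer: "x q = x' q" if "\<bar>q\<bar> < \<bar>p\<bar>" for q
    using p_min[of q] that by force
  define a where "a = shift_pow p x"
  define a' where "a' = shift_pow p x'"
  have "a \<in> X" "a' \<in> X"
    unfolding a_def a'_def using shift_pow_mem[OF inv] x by auto
  moreover have "\<phi> a = \<phi> a'"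
    unfolding a_def a'_def using code_shift_pow[OF inv code] x by simp
  moreover have "a 0 \<noteq> a' 0"
    unfolding a_def a'_def shift_pow_def using p by simp
  moreover have "(\<forall>i<0. nat \<bar>i\<bar> \<le> D \<longrightarrow> a i = a' i) \<or> (\<forall>i>0. nat \<bar>i\<bar> \<le> D \<longrightarrow> a i = a' i)"
  proof (cases "p > 0")
    case True
    then have "\<forall>i<0. nat \<bar>i\<bar> \<le> D \<longrightarrow> a i = a' i"
      unfolding a_def a'_def shift_pow_def using pD closer by auto
    then show ?thesis ..
  next
    case False
    then have "\<forall>i>0. nat \<bar>i\<bar> \<le> D \<longrightarrow> a i = a' i"
      unfolding a_def a'_def shift_pow_def using pD closer by auto
    then show ?thesis ..
  qed
  ultimately show ?thesis
    using that by blast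
qed

lemma bi_closing_left_agreeing_pairs_finite:
  fixes A A' :: "nat \<Rightarrow> int \<Rightarrow> 'a::finite"
  assumes cl: "closed_set X" and code: "is_code X Y \<phi>" and bc: "bi_closing X \<phi>"
    and pair: "\<And>n. n \<in> I \<Longrightarrow> A n \<in> X \<and> A' n \<in> X \<and> \<phi> (A n) = \<phi> (A' n) \<and> A n 0 \<noteq> A' n 0"
    and left: "\<And>n i. n \<in> I \<Longrightarrow> i < 0 \<Longrightarrow> nat \<bar>i\<bar> \<le> n \<Longrightarrow> A n i = A' n i"
  shows "finite I"
proof (rule ccontr)
  assume "infinite I"
  then have "\<exists>a\<in>X. \<exists>a'\<in>X. \<phi> a = \<phi> a' \<and> a 0 \<noteq> a' 0 \<and> (\<forall>i. i < 0 \<longrightarrow> a i = a' i)"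
    by (rule fibre_pair_limit[OF cl code _ pair left])
  then obtain a a' where "a \<in> X" "a' \<in> X" "\<phi> a = \<phi> a'" "a 0 \<noteq> a' 0" "\<And>i. i < 0 \<Longrightarrow> a i = a' i"
    by blast
  moreover from this have "left_asymptotic a a'" "a \<noteq> a'"
    by (auto intro: left_asymptoticI)
  ultimately show False
    using bc unfolding bi_closing_def by blast
qed

lemma bi_closing_right_agreeing_pairs_finite:
  fixes A A' :: "nat \<Rightarrow> int \<Rightarrow> 'a::finite"
  assumes cl: "closed_set X" and code: "is_code X Y \<phi>" and bc: "bi_closing X \<phi>"
    and pair: "\<And>n. n \<in> I \<Longrightarrow> A n \<in> X \<and> A' n \<in> X \<and> \<phi> (A n) = \<phi> (A' n) \<and> A n 0 \<noteq> A' n 0"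
    and right: "\<And>n i. n \<in> I \<Longrightarrow> 0 < i \<Longrightarrow> nat \<bar>i\<bar> \<le> n \<Longrightarrow> A n i = A' n i"
  shows "finite I"
proof (rule ccontr)
  assume "infinite I"
  then have "\<exists>a\<in>X. \<exists>a'\<in>X. \<phi> a = \<phi> a' \<and> a 0 \<noteq> a' 0 \<and> (\<forall>i. 0 < i \<longrightarrow> a i = a' i)"
    by (rule fibre_pair_limit[OF cl code _ pair right])
  then obtain a a' where "a \<in> X" "a' \<in> X" "\<phi> a = \<phi> a'" "a 0 \<noteq> a' 0" "\<And>i. 0 < i \<Longrightarrow> a i = a' i"
    by blast
  moreover from this have "right_asymptotic a a'" "a \<noteq> a'"
    by (auto intro: right_asymptoticI)
  ultimately show False
    using bc unfolding bi_closing_def by blast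
qed

lemma bi_closing_separates_fibres:
  fixes X :: "(int \<Rightarrow> 'a::finite) set"
  assumes X: "shift_space X" and code: "is_code X Y \<phi>" and bc: "bi_closing X \<phi>"
  obtains D where "\<And>x x'. x \<in> X \<Longrightarrow> x' \<in> X \<Longrightarrow> \<phi> x = \<phi> x' \<Longrightarrow> agree D x x' \<Longrightarrow> x = x'"
proof -
  have cl: "closed_set X" and inv: "shift ` X = X"
    using X unfolding shift_space_def by auto
  have "\<exists>D. \<forall>x\<in>X. \<forall>x'\<in>X. \<phi> x = \<phi> x' \<and> agree D x x' \<longrightarrow> x = x'"
  proof (rule ccontr)
    assume "\<nexists>D. \<forall>x\<in>X. \<forall>x'\<in>X. \<phi> x = \<phi> x' \<and> agree D x x' \<longrightarrow> x = x'"
    then have unseparated: "\<exists>x\<in>X. \<exists>x'\<in>X. \<phi> x = \<phi> x' \<and> agree D x x' \<and> x \<noteq> x'" for D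
      by blast
    define left where "left D a a' \<longleftrightarrow> (\<forall>i<0. nat \<bar>i\<bar> \<le> D \<longrightarrow> a i = a' i)"
      for D and a a' :: "int \<Rightarrow> 'a"
    define right where "right D a a' \<longleftrightarrow> (\<forall>i>0. nat \<bar>i\<bar> \<le> D \<longrightarrow> a i = a' i)"
      for D and a a' :: "int \<Rightarrow> 'a"
    have "\<exists>a a'. (a \<in> X \<and> a' \<in> X \<and> \<phi> a = \<phi> a' \<and> a 0 \<noteq> a' 0) \<and> (left D a a' \<or> right D a a')"
      for D
    proof -
      obtain x x' where "x \<in> X" "x' \<in> X" "\<phi> x = \<phi> x'" "agree D x x'" "x \<noteq> x'"
        using unseparated by blast
      then obtain a a' where "a \<in> X" "a' \<in> X" "\<phi> a = \<phi> a'" "a 0 \<noteq> a' 0" "left D a a' \<or> right D a a'"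
        unfolding left_def right_def by (rule fibre_pair_centred[OF inv code])
      then show ?thesis
        by blast
    qed
    then obtain A A' where AA: "\<And>D. A D \<in> X \<and> A' D \<in> X \<and> \<phi> (A D) = \<phi> (A' D) \<and> A D 0 \<noteq> A' D 0"
      and sides: "\<And>D. left D (A D) (A' D) \<or> right D (A D) (A' D)"
      by metis
    have "finite {D. left D (A D) (A' D)}"
      by (rule bi_closing_left_agreeing_pairs_finite[OF cl code bc AA]) (auto simp: left_def)
    moreover have "finite {D. right D (A D) (A' D)}"
      by (rule bi_closing_right_agreeing_pairs_finite[OF cl code bc AA]) (auto simp: right_def)
    ultimately have "finite ({D. left D (A D) (A' D)} \<union> {D. right D (A D) (A' D)})"
      by (rule finite_UnI)
    moreover have "{D. left D (A D) (A' D)} \<union> {D. right D (A D) (A' D)} = UNIV"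
      using sides by blast
    ultimately show False
      by simp
  qed
  then show ?thesis
    using that by blast
qed

lemma inj_on_window_fibre:
  assumes "\<And>x x'. x \<in> X \<Longrightarrow> x' \<in> X \<Longrightarrow> \<phi> x = \<phi> x' \<Longrightarrow> agree D x x' \<Longrightarrow> x = x'"
  shows "inj_on (window D) (fibre X \<phi> y)"
  using assms unfolding fibre_def inj_on_def agree_iff_window by auto

section \<open>Comparing the sizes of fibres\<close>

lemma is_word_window:
  assumes "y \<in> Y"
  shows "is_word Y (window k y)"
proof -
  have "occurs (window k y) y"
    unfolding occurs_def by (intro exI[of _ "- int k"]) (simp add: nth_window)
  then show ?thesis
    unfolding is_word_def using assms by blast
qed

lemma irreducible_orbit_near_both:
  assumes inv: "shift ` Y = Y" and irr: "irreducible Y" and y1: "y1 \<in> Y" and y2: "y2 \<in> Y"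
  obtains z j where "z \<in> Y" "agree N y2 z" "agree m y1 (shift_pow j z)"
proof -
  define u where "u = window N y2"
  define v where "v = window m y1"
  obtain w where "is_word Y (u @ w @ v)"
    using irr is_word_window[OF y1] is_word_window[OF y2] unfolding irreducible_def u_def v_def
    by blast
  then obtain z0 i where z0: "z0 \<in> Y"
    and occ: "\<And>j. j < length (u @ w @ v) \<Longrightarrow> z0 (i + int j) = (u @ w @ v) ! j"
    unfolding is_word_def occurs_def by blast
  define z where "z = shift_pow (i + int N) z0"
  define i' where "i' = i + int (length u + length w)"
  have "agree N y2 z"
    unfolding z_def agree_shift_pow_iff
  proof (intro allI impI)
    fix j assume "j < 2 * N + 1"
    then show "z0 (i + int j) = window N y2 ! j"
      using occ[of j] by (simp add: u_def nth_append)
  qed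
  moreover have "agree m y1 (shift_pow (i' + int m) z0)"
    unfolding agree_shift_pow_iff
  proof (intro allI impI)
    fix j assume "j < 2 * m + 1"
    then show "z0 (i' + int j) = window m y1 ! j"
      using occ[of "length u + length w + j"] by (simp add: i'_def v_def nth_append add.assoc)
  qed
  then have "agree m y1 (shift_pow (i' + int m - (i + int N)) z)"
    by (simp add: z_def shift_pow_add)
  moreover have "z \<in> Y"
    unfolding z_def using shift_pow_mem[OF inv z0] .
  ultimately show ?thesis
    using that by blast
qed

lemma fibre_windows_lower_semicontinuous:
  fixes X :: "(int \<Rightarrow> 'a::finite) set"
  assumes op: "open_code X Y \<phi>"
  obtains m where "\<And>y'. y' \<in> Y \<Longrightarrow> agree m y y' \<Longrightarrow> window D ` fibre X \<phi> y \<subseteq> window D ` fibre X \<phi> y'"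
proof -
  have "\<exists>m. \<forall>y'\<in>Y. agree m y y' \<longrightarrow> s \<in> window D ` fibre X \<phi> y'"
    if s: "s \<in> window D ` fibre X \<phi> y" for s
  proof -
    obtain x where x: "x \<in> X" "\<phi> x = y" "window D x = s"
      using s unfolding fibre_def by blast
    define U where "U = {x' \<in> X. agree D x x'}"
    have "open_in_space X U"
      unfolding open_in_space_def U_def using agree_trans by blast
    then have "open_in_space Y (\<phi> ` U)"
      using op unfolding open_code_def by blast
    moreover have "y \<in> \<phi> ` U"
      using x unfolding U_def agree_def by auto
    ultimately obtain m where "\<forall>y'\<in>Y. agree m y y' \<longrightarrow> y' \<in> \<phi> ` U"
      unfolding open_in_space_def by blast
    then show ?thesis
      unfolding U_def fibre_def using x agree_iff_window by fastforce
  qed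
  then obtain f where f: "\<And>s y'. s \<in> window D ` fibre X \<phi> y \<Longrightarrow> y' \<in> Y \<Longrightarrow> agree (f s) y y' \<Longrightarrow>
      s \<in> window D ` fibre X \<phi> y'"
    by metis
  define m where "m = Max (insert 0 (f ` window D ` fibre X \<phi> y))"
  have "f s \<le> m" if "s \<in> window D ` fibre X \<phi> y" for s
    unfolding m_def using that by (intro Max_ge) (simp_all add: finite_window_image)
  then have "window D ` fibre X \<phi> y \<subseteq> window D ` fibre X \<phi> y'"
    if "y' \<in> Y" "agree m y y'" for y'
    using f that agree_mono by blast
  then show ?thesis
    by (rule that)
qed

lemma fibre_window_limit:
  assumes cl: "closed_set X" and code: "is_code X Y \<phi>" and I: "infinite I"
    and conv: "\<And>n. n \<in> I \<Longrightarrow> agree n y (W n)"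
    and s: "\<And>n. n \<in> I \<Longrightarrow> s \<in> window D ` fibre X \<phi> (W n)"
  shows "s \<in> window D ` fibre X \<phi> y"
proof -
  have "\<exists>x. x \<in> X \<and> \<phi> x = W n \<and> window D x = s" if "n \<in> I" for n
    using s[OF that] unfolding fibre_def by blast
  then obtain xs where xs: "\<And>n. n \<in> I \<Longrightarrow> xs n \<in> X \<and> \<phi> (xs n) = W n \<and> window D (xs n) = s"
    by metis
  obtain c where c: "cluster_point I xs c"
    using exists_cluster_point[OF I] by blast
  have cX: "c \<in> X"
    using closed_set_cluster_point[OF cl c] xs by blast
  have "window D c = s"
  proof -
    obtain n where "n \<in> I" "agree D c (xs n)"
      using c unfolding cluster_point_def by blast
    then show ?thesis
      using xs agree_iff_window by metis
  qed
  moreover have "cluster_point I (\<lambda>n. \<phi> (xs n)) (\<phi> c)"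
    using code_cluster_point[OF code cX c] xs by blast
  then have "\<phi> c = y"
    by (rule cluster_point_eq_limit) (simp add: conv xs)
  ultimately show ?thesis
    unfolding fibre_def using cX by blast
qed

lemma card_fibre_le_nearby:
  fixes X :: "(int \<Rightarrow> 'a::finite) set" and Y :: "(int \<Rightarrow> 'b::finite) set"
  assumes X: "shift_space X" and Y: "shift_space Y" and irr: "irreducible Y"
    and code: "is_code X Y \<phi>" and op: "open_code X Y \<phi>"
    and inj: "\<And>y. inj_on (window D) (fibre X \<phi> y)"
    and y1: "y1 \<in> Y" and y2: "y2 \<in> Y"
  obtains w where "w \<in> Y" "agree N y2 w" "card (fibre X \<phi> y1) \<le> card (fibre X \<phi> w)"
proof -
  have inv: "shift ` X = X" and invY: "shift ` Y = Y"
    using X Y unfolding shift_space_def by auto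
  have card_windows: "card (window D ` fibre X \<phi> y) = card (fibre X \<phi> y)" for y
    using inj by (rule card_image)
  obtain m where m: "\<And>y'. y' \<in> Y \<Longrightarrow> agree m y1 y' \<Longrightarrow> window D ` fibre X \<phi> y1 \<subseteq> window D ` fibre X \<phi> y'"
    using fibre_windows_lower_semicontinuous[OF op] by blast
  obtain z j where z: "z \<in> Y" "agree N y2 z" "agree m y1 (shift_pow j z)"
    using irreducible_orbit_near_both[OF invY irr y1 y2] by blast
  have "card (fibre X \<phi> y1) = card (window D ` fibre X \<phi> y1)"
    by (simp add: card_windows)
  also have "\<dots> \<le> card (window D ` fibre X \<phi> (shift_pow j z))"
    using m z shift_pow_mem[OF invY] by (simp add: card_mono finite_window_image)
  also have "\<dots> = card (fibre X \<phi> z)"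
    by (simp add: card_windows card_fibre_shift_pow[OF inv code])
  finally show ?thesis
    using that z by blast
qed

lemma card_fibre_le:
  fixes X :: "(int \<Rightarrow> 'a::finite) set" and Y :: "(int \<Rightarrow> 'b::finite) set"
  assumes X: "shift_space X" and Y: "shift_space Y" and irr: "irreducible Y"
    and code: "is_code X Y \<phi>" and op: "open_code X Y \<phi>"
    and inj: "\<And>y. inj_on (window D) (fibre X \<phi> y)"
    and y1: "y1 \<in> Y" and y2: "y2 \<in> Y"
  shows "card (fibre X \<phi> y1) \<le> card (fibre X \<phi> y2)"
proof -
  have cl: "closed_set X"
    using X unfolding shift_space_def by auto
  define P where "P y = window D ` fibre X \<phi> y" for y
  have card_P: "card (P y) = card (fibre X \<phi> y)" for y
    unfolding P_def using inj by (rule card_image)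
  have "\<exists>w. agree N y2 w \<and> card (fibre X \<phi> y1) \<le> card (fibre X \<phi> w)" for N
    using card_fibre_le_nearby[OF X Y irr code op inj y1 y2] by blast
  then obtain W where W: "\<And>N. agree N y2 (W N)"
    and card_W: "\<And>N. card (fibre X \<phi> y1) \<le> card (fibre X \<phi> (W N))"
    by metis
  have "finite (range (\<lambda>N. P (W N)))"
    by (rule finite_subset[of _ "Pow (range (window D))"]) (auto simp: P_def finite_range_window)
  then obtain N0 where I: "infinite {N. P (W N) = P (W N0)}"
    using pigeonhole_infinite[OF infinite_UNIV_nat] by auto
  have "P (W N0) \<subseteq> P y2"
  proof
    fix s assume s: "s \<in> P (W N0)"
    show "s \<in> P y2"
      unfolding P_def
    proof (rule fibre_window_limit[OF cl code I])
      show "agree n y2 (W n)" for n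
        by (rule W)
      show "s \<in> window D ` fibre X \<phi> (W n)" if "n \<in> {N. P (W N) = P (W N0)}" for n
        using s that unfolding P_def by simp
    qed
  qed
  then have "card (P (W N0)) \<le> card (P y2)"
    by (simp add: card_mono P_def finite_window_image)
  then show ?thesis
    using card_W[of N0] by (simp add: card_P)
qed

theorem corollary2p9:
  fixes X :: "(int \<Rightarrow> 'a::finite) set" and Y :: "(int \<Rightarrow> 'b::finite) set"
    and \<phi> :: "(int \<Rightarrow> 'a) \<Rightarrow> (int \<Rightarrow> 'b)"
  assumes "shift_space X" and "shift_space Y" and "irreducible Y"
    and "is_code X Y \<phi>" and "open_code X Y \<phi>" and "bi_closing X \<phi>"
  shows "constant_to_one X Y \<phi>"
proof (cases "Y = {}")
  case True
  then show ?thesis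
    unfolding constant_to_one_def by blast
next
  case False
  then obtain y0 where y0: "y0 \<in> Y"
    by blast
  obtain D where "\<And>x x'. x \<in> X \<Longrightarrow> x' \<in> X \<Longrightarrow> \<phi> x = \<phi> x' \<Longrightarrow> agree D x x' \<Longrightarrow> x = x'"
    using bi_closing_separates_fibres[OF assms(1,4,6)] by blast
  then have inj: "\<And>y. inj_on (window D) (fibre X \<phi> y)"
    by (rule inj_on_window_fibre)
  have "finite (fibre X \<phi> y)" for y
    using finite_imageD[OF finite_window_image inj] .
  moreover have "card (fibre X \<phi> y) = card (fibre X \<phi> y0)" if "y \<in> Y" for y
    using card_fibre_le[OF assms(1-5) inj] that y0 by (meson antisym)
  ultimately show ?thesis
    unfolding constant_to_one_def fibre_def by blast
qed

end
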